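(* Let $G$ be a finite group and let $V$ be an abelian normal $2$-subgroup of $G$ such that $C_G(V)\leq V$. Let $\alpha$ be an automorphism of $G$ such that $[V,\alpha]=1$ and $\alpha^2\in\mathrm{Inn}(G)$. Then $[G,\alpha] \leq V$, and if $G$ acts fixed point freely on $V/\Phi(V)$, then the order of $\alpha$ is at most the exponent of $V$.
   Context: $\mathrm{Inn}(G)$ denotes the group of inner automorphisms of $G$. *)

theory Defs
  imports "HOL-Algebra.Algebra"
begin

(* Frattini subgroup of a subgroup H of G: intersection of the maximal subgroups of H
   (intersected with H, so that it equals H when H has no maximal subgroup, i.e. H trivial). *)
definition frattini :: "('a, 'b) monoid_scheme \<Rightarrow> 'a set \<Rightarrow> 'a set" where
  "frattini G H = H \<inter> \<Inter> {M. subgroup M G \<and> M \<subset> H \<and>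
      (\<forall>K. subgroup K G \<and> M \<subseteq> K \<and> K \<subseteq> H \<longrightarrow> K = M \<or> K = H)}"

definition subgroup_exponent :: "('a, 'b) monoid_scheme \<Rightarrow> 'a set \<Rightarrow> nat" where
  "subgroup_exponent G H = (LEAST n. 0 < n \<and> (\<forall>h\<in>H. h [^]\<^bsub>G\<^esub> n = \<one>\<^bsub>G\<^esub>))"

definition commutator_aut :: "('a, 'b) monoid_scheme \<Rightarrow> ('a \<Rightarrow> 'a) \<Rightarrow> 'a set" where
  "commutator_aut G \<alpha> = generate G {inv\<^bsub>G\<^esub> g \<otimes>\<^bsub>G\<^esub> \<alpha> g | g. g \<in> carrier G}"

end

theory Submission
  imports Defs
begin

text \<open>Since \<open>\<alpha>\<close> fixes \<open>V\<close> pointwise, conjugation by \<open>g\<close> and by \<open>\<alpha> g\<close> agree on \<open>V\<close>, so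
  \<open>(\<alpha> g)\<inverse> g\<close> centralizes \<open>V\<close> and hence lies in \<open>V\<close>. Thus \<open>\<alpha> g = g d\<close> with \<open>d \<in> V\<close> fixed
  by \<open>\<alpha>\<close>, whence \<open>\<alpha>\<^sup>n g = g d\<^sup>n\<close>, and \<open>\<alpha>\<close> is the identity after as many steps as the exponent
  of \<open>V\<close>.\<close>

lemma (in group) inv_mult_hom_image_in_self_centralizing_normal:
  assumes "V \<lhd> G"
    and self_centralizing: "\<forall>g\<in>carrier G. (\<forall>v\<in>V. g \<otimes> v = v \<otimes> g) \<longrightarrow> g \<in> V"
    and "\<alpha> \<in> hom G G" and fixes_V: "\<forall>v\<in>V. \<alpha> v = v"
    and g: "g \<in> carrier G"
  shows "inv g \<otimes> \<alpha> g \<in> V"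
proof -
  interpret V: normal V G by fact
  interpret \<alpha>: group_hom G G \<alpha>
    using \<open>\<alpha> \<in> hom G G\<close> by (simp add: group_hom_def group_hom_axioms_def is_group)
  define a where "a = \<alpha> g"
  have a: "a \<in> carrier G" using g by (simp add: a_def)
  have conj_eq: "g \<otimes> v \<otimes> inv g = a \<otimes> v \<otimes> inv a" if v: "v \<in> V" for v
  proof -
    have "g \<otimes> v \<otimes> inv g = \<alpha> (g \<otimes> v \<otimes> inv g)"
      using fixes_V V.inv_op_closed2[OF g v] by simp
    also have "\<dots> = a \<otimes> v \<otimes> inv a"
      using g v fixes_V by (simp add: a_def \<alpha>.hom_inv)
    finally show ?thesis .
  qed
  have "inv a \<otimes> g \<otimes> v = v \<otimes> (inv a \<otimes> g)" if v: "v \<in> V" for v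
  proof -
    have vG: "v \<in> carrier G" using v by auto
    have "inv a \<otimes> g \<otimes> v = inv a \<otimes> (g \<otimes> v \<otimes> inv g) \<otimes> g"
      using a g vG by (simp add: m_assoc)
    also have "\<dots> = inv a \<otimes> (a \<otimes> v \<otimes> inv a) \<otimes> g"
      using conj_eq[OF v] by simp
    also have "\<dots> = v \<otimes> (inv a \<otimes> g)"
      using a g vG by (simp add: m_assoc flip: m_assoc[of "inv a" a])
    finally show ?thesis .
  qed
  then have "inv a \<otimes> g \<in> V"
    using self_centralizing a g by blast
  then have "inv (inv a \<otimes> g) \<in> V" by simp
  then show ?thesis
    using a g by (simp add: a_def inv_mult_group)
qed

lemma (in group) commutator_aut_subset:
  assumes "subgroup V G" and "\<forall>g\<in>carrier G. inv g \<otimes> \<alpha> g \<in> V"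
  shows "commutator_aut G \<alpha> \<subseteq> V"
  unfolding commutator_aut_def
  by (rule generate_subgroup_incl[OF _ assms(1)]) (use assms(2) in auto)

lemma (in group) AutoGroup_pow_apply:
  assumes "\<alpha> \<in> auto G" and "x \<in> carrier G"
  shows "(\<alpha> [^]\<^bsub>AutoGroup G\<^esub> n) x = (\<alpha> ^^ n) x"
proof -
  interpret A: group "AutoGroup G" by (rule AutoGroup)
  have \<alpha>A: "\<alpha> \<in> carrier (AutoGroup G)" using assms(1) by (simp add: AutoGroup_def)
  show ?thesis
  proof (induction n)
    case 0
    show ?case using assms(2) by (simp add: AutoGroup_def BijGroup_def)
  next
    case (Suc n)
    have "\<alpha> [^]\<^bsub>AutoGroup G\<^esub> n \<in> auto G"
      using A.nat_pow_closed[OF \<alpha>A] by (simp add: AutoGroup_def)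
    then show ?case
      unfolding A.nat_pow_Suc2[OF \<alpha>A]
      using Suc assms \<alpha>A by (simp add: AutoGroup_def BijGroup_def auto_def compose_def)
  qed
qed

lemma (in group) AutoGroup_eq_one_iff:
  assumes "f \<in> auto G"
  shows "f = \<one>\<^bsub>AutoGroup G\<^esub> \<longleftrightarrow> (\<forall>x\<in>carrier G. f x = x)"
proof -
  have "f \<in> extensional (carrier G)"
    using assms by (simp add: auto_def Bij_def)
  then show ?thesis
    by (auto simp: AutoGroup_def BijGroup_def intro: extensionalityI)
qed

lemma (in group) funpow_hom_apply_of_fixed_increment:
  assumes "\<alpha> \<in> hom G G" and x: "x \<in> carrier G" and d: "d \<in> carrier G"
    and "\<alpha> x = x \<otimes> d" and "\<alpha> d = d"
  shows "(\<alpha> ^^ n) x = x \<otimes> d [^] n"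
proof (induction n)
  case 0
  show ?case using x by simp
next
  case (Suc n)
  have "(\<alpha> ^^ Suc n) x = \<alpha> x \<otimes> \<alpha> (d [^] n)"
    using Suc x d \<open>\<alpha> \<in> hom G G\<close> by (simp add: hom_mult)
  also have "\<dots> = x \<otimes> (d \<otimes> d [^] n)"
    using assms by (simp add: hom_nat_pow is_group m_assoc)
  also have "\<dots> = x \<otimes> d [^] Suc n"
    using d by (simp only: nat_pow_Suc2)
  finally show ?case .
qed

lemma (in group) subgroup_exponent_pow_eq_one:
  assumes "finite (carrier G)" and "H \<subseteq> carrier G"
  shows "0 < subgroup_exponent G H \<and> (\<forall>h\<in>H. h [^] subgroup_exponent G H = \<one>)"
  unfolding subgroup_exponent_def
proof (rule LeastI)
  show "0 < order G \<and> (\<forall>h\<in>H. h [^] order G = \<one>)"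
    using assms pow_order_eq_1 by (auto simp: order_def card_gt_0_iff)
qed

lemma (in group) ord_AutoGroup_le_subgroup_exponent:
  assumes "finite (carrier G)" and "subgroup V G"
    and "\<alpha> \<in> auto G" and fixes_V: "\<forall>v\<in>V. \<alpha> v = v"
    and moves_into_V: "\<forall>g\<in>carrier G. inv g \<otimes> \<alpha> g \<in> V"
  shows "group.ord (AutoGroup G) \<alpha> \<le> subgroup_exponent G V"
proof -
  interpret A: group "AutoGroup G" by (rule AutoGroup)
  interpret V: subgroup V G by fact
  define e where "e = subgroup_exponent G V"
  have e: "0 < e" "\<forall>v\<in>V. v [^] e = \<one>"
    using subgroup_exponent_pow_eq_one[OF assms(1) V.subset] by (simp_all add: e_def)
  have \<alpha>A: "\<alpha> \<in> carrier (AutoGroup G)" using assms(3) by (simp add: AutoGroup_def)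
  have "(\<alpha> ^^ e) x = x" if x: "x \<in> carrier G" for x
  proof -
    define d where "d = inv x \<otimes> \<alpha> x"
    have dV: "d \<in> V" using moves_into_V x by (simp add: d_def)
    have "\<alpha> x \<in> carrier G" using x assms(3) by (auto simp: auto_def intro: hom_in_carrier)
    then have "\<alpha> x = x \<otimes> d" using x by (simp add: d_def flip: m_assoc)
    then have "(\<alpha> ^^ e) x = x \<otimes> d [^] e"
      using assms(3) x dV fixes_V
      by (intro funpow_hom_apply_of_fixed_increment) (auto simp: auto_def)
    then show ?thesis using e(2) dV x by simp
  qed
  moreover have "\<alpha> [^]\<^bsub>AutoGroup G\<^esub> e \<in> auto G"
    using A.nat_pow_closed[OF \<alpha>A] by (simp add: AutoGroup_def)
  ultimately have "\<alpha> [^]\<^bsub>AutoGroup G\<^esub> e = \<one>\<^bsub>AutoGroup G\<^esub>"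
    by (simp add: AutoGroup_eq_one_iff AutoGroup_pow_apply assms(3))
  then have "A.ord \<alpha> dvd e" using A.pow_eq_id[OF \<alpha>A] by blast
  then show ?thesis using e(1) by (simp add: e_def dvd_imp_le)
qed

theorem lemma3p4:
  fixes G :: "('a, 'b) monoid_scheme" and V :: "'a set" and \<alpha> :: "'a \<Rightarrow> 'a"
  assumes "group G" and "finite (carrier G)"
    and "V \<lhd> G"
    and "comm_group (G\<lparr>carrier := V\<rparr>)"
    and "\<exists>k. card V = 2 ^ k"
    and "\<forall>g\<in>carrier G. (\<forall>v\<in>V. g \<otimes>\<^bsub>G\<^esub> v = v \<otimes>\<^bsub>G\<^esub> g) \<longrightarrow> g \<in> V"
    and "\<alpha> \<in> auto G"
    and "\<forall>v\<in>V. \<alpha> v = v"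
    and "\<exists>x\<in>carrier G. \<forall>y\<in>carrier G. \<alpha> (\<alpha> y) = x \<otimes>\<^bsub>G\<^esub> y \<otimes>\<^bsub>G\<^esub> inv\<^bsub>G\<^esub> x"
  shows "commutator_aut G \<alpha> \<subseteq> V \<and>
    ((\<forall>v\<in>V. (\<forall>g\<in>carrier G. frattini G V #>\<^bsub>G\<^esub> (g \<otimes>\<^bsub>G\<^esub> v \<otimes>\<^bsub>G\<^esub> inv\<^bsub>G\<^esub> g)
                                  = frattini G V #>\<^bsub>G\<^esub> v)
             \<longrightarrow> v \<in> frattini G V)
     \<longrightarrow> group.ord (AutoGroup G) \<alpha> \<le> subgroup_exponent G V)"
proof -
  interpret G: group G by fact
  have V: "subgroup V G" using assms(3) by (rule normal_imp_subgroup)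
  have moves_into_V: "\<forall>g\<in>carrier G. inv\<^bsub>G\<^esub> g \<otimes>\<^bsub>G\<^esub> \<alpha> g \<in> V"
    using G.inv_mult_hom_image_in_self_centralizing_normal[OF assms(3) assms(6) _ assms(8)]
      assms(7) by (simp add: auto_def)
  show ?thesis
    using G.commutator_aut_subset[OF V moves_into_V]
      G.ord_AutoGroup_le_subgroup_exponent[OF assms(2) V assms(7,8) moves_into_V]
    by blast
qed

end
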